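(* Let $\mathbb{F}$ be an infinite field with $\operatorname{char}(\mathbb{F})\neq 2$, let $G$ be a group with a group involution $\ast$ and a non-trivial orientation $\sigma$ such that $gg^\ast\in N=\ker\sigma$ for all $g\in G$, and let $\circledast$ be the associated oriented involution of $\mathbb{F}G$. If $\mathbb{F}G$ is normal with respect to $\circledast$, then $N^+\subseteq\zeta(G)$.
   Context: A group involution on $G$ is a map $\ast:G\to G$ with $(gh)^\ast=h^\ast g^\ast$ and $(g^\ast)^\ast=g$. An orientation is a group homomorphism $\sigma:G\to\{\pm1\}$. The oriented involution is $(\sum_g\alpha_g g)^\circledast=\sum_g\alpha_g\sigma(g)g^\ast$ on $\mathbb{F}G$. $\mathbb{F}G$ is normal if $\alpha\alpha^\circledast=\alpha^\circledast\alpha$ for all $\alpha\in\mathbb{F}G$. $N^+$ denotes the set of elements $g\in G$ with $g^\circledast=g$, i.e. $N^+=\{n\in N: n^\ast=n\}$. $\zeta(G)$ is the center of $G$. *)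

theory Defs
  imports "HOL-Algebra.Group"
begin

definition group_ring :: "('g, 'b) monoid_scheme \<Rightarrow> ('g \<Rightarrow> 'f::field) set" where
  "group_ring G = {a. (\<forall>x. x \<notin> carrier G \<longrightarrow> a x = 0) \<and> finite {x. a x \<noteq> 0}}"

definition gr_mult :: "('g, 'b) monoid_scheme \<Rightarrow> ('g \<Rightarrow> 'f::field) \<Rightarrow> ('g \<Rightarrow> 'f) \<Rightarrow> ('g \<Rightarrow> 'f)" where
  "gr_mult G a b = (\<lambda>x. if x \<in> carrier G
      then (\<Sum>g\<in>{g \<in> carrier G. a g \<noteq> 0}. a g * b (inv\<^bsub>G\<^esub> g \<otimes>\<^bsub>G\<^esub> x)) else 0)"

definition group_involution :: "('g, 'b) monoid_scheme \<Rightarrow> ('g \<Rightarrow> 'g) \<Rightarrow> bool" where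
  "group_involution G s \<longleftrightarrow> (\<forall>g\<in>carrier G. s g \<in> carrier G) \<and>
     (\<forall>g\<in>carrier G. \<forall>h\<in>carrier G. s (g \<otimes>\<^bsub>G\<^esub> h) = s h \<otimes>\<^bsub>G\<^esub> s g) \<and>
     (\<forall>g\<in>carrier G. s (s g) = g)"

definition orientation :: "('g, 'b) monoid_scheme \<Rightarrow> ('g \<Rightarrow> int) \<Rightarrow> bool" where
  "orientation G \<sigma> \<longleftrightarrow> (\<forall>g\<in>carrier G. \<sigma> g = 1 \<or> \<sigma> g = -1) \<and>
     (\<forall>g\<in>carrier G. \<forall>h\<in>carrier G. \<sigma> (g \<otimes>\<^bsub>G\<^esub> h) = \<sigma> g * \<sigma> h)"

text \<open>Oriented involution: (\<Sum> a_g g)^\<circledast> = \<Sum> a_g \<sigma>(g) g^*; the coefficient at x is \<sigma>(x^*) a(x^*).\<close>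
definition oriented_inv :: "('g, 'b) monoid_scheme \<Rightarrow> ('g \<Rightarrow> 'g) \<Rightarrow> ('g \<Rightarrow> int) \<Rightarrow> ('g \<Rightarrow> 'f::field) \<Rightarrow> ('g \<Rightarrow> 'f)" where
  "oriented_inv G s \<sigma> a = (\<lambda>x. if x \<in> carrier G then of_int (\<sigma> (s x)) * a (s x) else 0)"

definition group_center :: "('g, 'b) monoid_scheme \<Rightarrow> 'g set" where
  "group_center G = {z \<in> carrier G. \<forall>g\<in>carrier G. z \<otimes>\<^bsub>G\<^esub> g = g \<otimes>\<^bsub>G\<^esub> z}"

end

theory Submission
  imports Defs
begin

text \<open>Fix n \<in> N with n* = n. Expanding normality for n, y and n + y leaves the identity
  \<sigma>(y) n y* + y n = n y + \<sigma>(y) y* n in FG. Comparing coefficients (using char F \<noteq> 2) shows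
  that n commutes with every y outside N with y* = y and with every y \<in> N with y* \<noteq> y, and
  that y n = n y* whenever y \<notin> N does not commute with n. Any remaining g is reduced to these
  cases by passing to g n, since (g n)* = n g*.\<close>

definition gr_basis :: "'g \<Rightarrow> 'g \<Rightarrow> 'f::field" where
  "gr_basis u = (\<lambda>z. if z = u then 1 else 0)"

lemma group_ring_finite_support:
  "a \<in> group_ring G \<Longrightarrow> finite {g \<in> carrier G. a g \<noteq> 0}"
  unfolding group_ring_def by (auto intro: finite_subset)

lemma gr_basis_in_group_ring: "u \<in> carrier G \<Longrightarrow> (gr_basis u :: 'g \<Rightarrow> 'f::field) \<in> group_ring G"
  unfolding group_ring_def gr_basis_def by auto

lemma group_ring_add_closed:
  assumes "a \<in> group_ring G" "b \<in> group_ring G"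
  shows "(\<lambda>z. a z + b z) \<in> group_ring G"
proof -
  have "{x. a x + b x \<noteq> 0} \<subseteq> {x. a x \<noteq> 0} \<union> {x. b x \<noteq> 0}" by auto
  with assms show ?thesis
    unfolding group_ring_def by (auto intro: finite_subset)
qed

lemma oriented_inv_in_group_ring:
  assumes "group_involution G s" "a \<in> group_ring G"
  shows "oriented_inv G s \<sigma> a \<in> group_ring G"
proof -
  have "{x. oriented_inv G s \<sigma> a x \<noteq> 0} \<subseteq> s ` {x. a x \<noteq> 0}"
  proof
    fix x assume "x \<in> {x. oriented_inv G s \<sigma> a x \<noteq> 0}"
    then have x: "x \<in> carrier G" and "a (s x) \<noteq> 0"
      unfolding oriented_inv_def by (auto split: if_splits)
    moreover have "x = s (s x)" using x assms(1) unfolding group_involution_def by simp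
    ultimately show "x \<in> s ` {x. a x \<noteq> 0}" by blast
  qed
  moreover have "finite (s ` {x. a x \<noteq> 0})" using assms(2) unfolding group_ring_def by simp
  ultimately have "finite {x. oriented_inv G s \<sigma> a x \<noteq> 0}" by (rule finite_subset)
  then show ?thesis unfolding group_ring_def by (simp add: oriented_inv_def)
qed

lemma oriented_inv_add:
  "oriented_inv G s \<sigma> (\<lambda>z. a z + b z) = (\<lambda>z. oriented_inv G s \<sigma> a z + oriented_inv G s \<sigma> b z)"
  unfolding oriented_inv_def by (auto simp: algebra_simps)

lemma oriented_inv_gr_basis:
  assumes "group_involution G s" "u \<in> carrier G" "z \<in> carrier G"
  shows "oriented_inv G s \<sigma> (gr_basis u :: 'g \<Rightarrow> 'f::field) z = (if z = s u then of_int (\<sigma> u) else 0)"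
proof -
  have "s (s z) = z" "s (s u) = u" using assms unfolding group_involution_def by simp_all
  then have "(s z = u) = (z = s u)" by metis
  then show ?thesis using assms(3) unfolding oriented_inv_def gr_basis_def by auto
qed

lemma gr_mult_eq_sum_superset:
  assumes "finite S" "S \<subseteq> carrier G" "{g \<in> carrier G. a g \<noteq> 0} \<subseteq> S" "x \<in> carrier G"
  shows "gr_mult G a b x = (\<Sum>g\<in>S. a g * b (inv\<^bsub>G\<^esub> g \<otimes>\<^bsub>G\<^esub> x))"
  unfolding gr_mult_def using assms by (auto intro!: sum.mono_neutral_left)

lemma gr_mult_add_left:
  assumes "a \<in> group_ring G" "b \<in> group_ring G"
  shows "gr_mult G (\<lambda>z. a z + b z) c = (\<lambda>z. gr_mult G a c z + gr_mult G b c z)"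
proof
  fix x
  let ?S = "{g \<in> carrier G. a g \<noteq> 0} \<union> {g \<in> carrier G. b g \<noteq> 0}"
  have S: "finite ?S" using group_ring_finite_support assms by blast
  show "gr_mult G (\<lambda>z. a z + b z) c x = gr_mult G a c x + gr_mult G b c x"
  proof (cases "x \<in> carrier G")
    case True
    have "gr_mult G (\<lambda>z. a z + b z) c x = (\<Sum>g\<in>?S. (a g + b g) * c (inv\<^bsub>G\<^esub> g \<otimes>\<^bsub>G\<^esub> x))"
      by (rule gr_mult_eq_sum_superset[OF S _ _ True]) auto
    also have "\<dots> = (\<Sum>g\<in>?S. a g * c (inv\<^bsub>G\<^esub> g \<otimes>\<^bsub>G\<^esub> x)) + (\<Sum>g\<in>?S. b g * c (inv\<^bsub>G\<^esub> g \<otimes>\<^bsub>G\<^esub> x))"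
      by (simp add: distrib_right sum.distrib)
    also have "\<dots> = gr_mult G a c x + gr_mult G b c x"
      using gr_mult_eq_sum_superset[OF S _ _ True, of a c] gr_mult_eq_sum_superset[OF S _ _ True, of b c]
      by auto
    finally show ?thesis .
  qed (simp add: gr_mult_def)
qed

lemma gr_mult_add_right:
  "gr_mult G a (\<lambda>z. b z + c z) = (\<lambda>z. gr_mult G a b z + gr_mult G a c z)"
  unfolding gr_mult_def by (auto simp: distrib_left sum.distrib)

lemma gr_mult_gr_basis_left:
  assumes "u \<in> carrier G" "x \<in> carrier G"
  shows "gr_mult G (gr_basis u) b x = b (inv\<^bsub>G\<^esub> u \<otimes>\<^bsub>G\<^esub> x)"
  using gr_mult_eq_sum_superset[of "{u}" G "gr_basis u" x b] assms by (auto simp: gr_basis_def)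

lemma gr_mult_gr_basis_right:
  fixes G (structure)
  assumes "group G" "a \<in> group_ring G" "v \<in> carrier G" "x \<in> carrier G"
  shows "gr_mult G a (gr_basis v) x = a (x \<otimes> inv v)"
proof -
  interpret group G by fact
  let ?w = "x \<otimes> inv v"
  let ?S = "insert ?w {g \<in> carrier G. a g \<noteq> 0}"
  have S: "finite ?S" using group_ring_finite_support assms by blast
  have w: "?w \<in> carrier G" using assms by simp
  have "gr_mult G a (gr_basis v) x = (\<Sum>g\<in>?S. a g * gr_basis v (inv g \<otimes> x))"
    by (rule gr_mult_eq_sum_superset[OF S _ _ assms(4)]) (use w in auto)
  also have "\<dots> = (\<Sum>g\<in>?S. if g = ?w then a g else 0)"
  proof (rule sum.cong)
    fix g assume "g \<in> ?S"
    then have "g \<in> carrier G" using w by auto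
    then have "(inv g \<otimes> x = v) = (g = ?w)"
      using assms by (metis inv_solve_left inv_solve_right)
    then show "a g * gr_basis v (inv g \<otimes> x) = (if g = ?w then a g else 0)"
      by (simp add: gr_basis_def)
  qed simp
  also have "\<dots> = a ?w" using S by simp
  finally show ?thesis .
qed

lemma oriented_normal_cross_terms:
  fixes G (structure) and a b :: "'g \<Rightarrow> 'f::field"
  assumes inv: "group_involution G s"
    and normal: "\<forall>a\<in>(group_ring G :: ('g \<Rightarrow> 'f) set).
           gr_mult G a (oriented_inv G s \<sigma> a) = gr_mult G (oriented_inv G s \<sigma> a) a"
    and a: "a \<in> group_ring G" and b: "b \<in> group_ring G"
  shows "gr_mult G a (oriented_inv G s \<sigma> b) p + gr_mult G b (oriented_inv G s \<sigma> a) p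
       = gr_mult G (oriented_inv G s \<sigma> a) b p + gr_mult G (oriented_inv G s \<sigma> b) a p"
proof -
  let ?a' = "oriented_inv G s \<sigma> a" and ?b' = "oriented_inv G s \<sigma> b"
  have a': "?a' \<in> group_ring G" and b': "?b' \<in> group_ring G"
    using oriented_inv_in_group_ring[OF inv] a b by blast+
  have "gr_mult G (\<lambda>z. a z + b z) (oriented_inv G s \<sigma> (\<lambda>z. a z + b z))
      = gr_mult G (oriented_inv G s \<sigma> (\<lambda>z. a z + b z)) (\<lambda>z. a z + b z)"
    using normal group_ring_add_closed[OF a b] by blast
  then have "gr_mult G (\<lambda>z. a z + b z) (\<lambda>z. ?a' z + ?b' z) p
      = gr_mult G (\<lambda>z. ?a' z + ?b' z) (\<lambda>z. a z + b z) p"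
    by (simp only: oriented_inv_add)
  moreover have "gr_mult G a ?a' p = gr_mult G ?a' a p" "gr_mult G b ?b' p = gr_mult G ?b' b p"
    using normal a b by simp_all
  ultimately show ?thesis
    by (simp add: gr_mult_add_left[OF a b] gr_mult_add_left[OF a' b'] gr_mult_add_right algebra_simps)
qed

context
  fixes G :: "('g, 'b) monoid_scheme" (structure) and s :: "'g \<Rightarrow> 'g" and \<sigma> :: "'g \<Rightarrow> int"
    and n :: 'g
  assumes grp: "group G" and inv: "group_involution G s"
    and two: "(2::'f::field) \<noteq> 0"
    and normal: "\<forall>a\<in>(group_ring G :: ('g \<Rightarrow> 'f) set).
           gr_mult G a (oriented_inv G s \<sigma> a) = gr_mult G (oriented_inv G s \<sigma> a) a"
    and n: "n \<in> carrier G" "\<sigma> n = 1" "s n = n"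
begin

interpretation group G by (rule grp)

lemma involution_closed: "y \<in> carrier G \<Longrightarrow> s y \<in> carrier G"
  using inv unfolding group_involution_def by simp

text \<open>The coefficient at p of \<sigma>(y) n y* + y n = n y + \<sigma>(y) y* n.\<close>

lemma normal_coeff_identity:
  assumes y: "y \<in> carrier G" and p: "p \<in> carrier G"
  shows "(if p = n \<otimes> s y then (of_int (\<sigma> y) :: 'f) else 0) + (if p = y \<otimes> n then 1 else 0)
       = (if p = n \<otimes> y then 1 else 0) + (if p = s y \<otimes> n then of_int (\<sigma> y) else 0)"
proof -
  let ?n = "gr_basis n :: 'g \<Rightarrow> 'f" and ?y = "gr_basis y :: 'g \<Rightarrow> 'f"
  have in_ring: "?n \<in> group_ring G" "?y \<in> group_ring G"
    using n(1) y by (simp_all add: gr_basis_in_group_ring)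
  have n': "oriented_inv G s \<sigma> ?n z = (if z = n then 1 else 0)" if "z \<in> carrier G" for z
    by (simp add: oriented_inv_gr_basis[OF inv n(1) that] n)
  have y': "oriented_inv G s \<sigma> ?y z = (if z = s y then of_int (\<sigma> y) else 0)" if "z \<in> carrier G" for z
    by (rule oriented_inv_gr_basis[OF inv y that])
  have ring': "oriented_inv G s \<sigma> ?n \<in> group_ring G" "oriented_inv G s \<sigma> ?y \<in> group_ring G"
    using in_ring by (simp_all add: oriented_inv_in_group_ring[OF inv])
  have sy: "s y \<in> carrier G" by (rule involution_closed[OF y])
  have "gr_mult G ?n (oriented_inv G s \<sigma> ?y) p = (if p = n \<otimes> s y then of_int (\<sigma> y) else 0)"
    using n p sy by (simp add: gr_mult_gr_basis_left[OF n(1) p] y' inv_solve_left')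
  moreover have "gr_mult G ?y (oriented_inv G s \<sigma> ?n) p = (if p = y \<otimes> n then 1 else 0)"
    using n p y by (simp add: gr_mult_gr_basis_left[OF y p] n' inv_solve_left')
  moreover have "gr_mult G (oriented_inv G s \<sigma> ?n) ?y p = (if p = n \<otimes> y then 1 else 0)"
    using n p y by (simp add: gr_mult_gr_basis_right[OF grp ring'(1) y p] n' inv_solve_right')
  moreover have "gr_mult G (oriented_inv G s \<sigma> ?y) ?n p = (if p = s y \<otimes> n then of_int (\<sigma> y) else 0)"
    using n p sy by (simp add: gr_mult_gr_basis_right[OF grp ring'(2) n(1) p] y' inv_solve_right')
  ultimately show ?thesis
    using oriented_normal_cross_terms[OF inv normal in_ring, of p] by simp
qed

lemma commutes_if_sign_pos_not_fixed:
  assumes y: "y \<in> carrier G" "\<sigma> y = 1" "s y \<noteq> y"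
  shows "n \<otimes> y = y \<otimes> n"
proof (rule ccontr)
  assume noncomm: "n \<otimes> y \<noteq> y \<otimes> n"
  have "n \<otimes> y \<noteq> n \<otimes> s y" using y n involution_closed[OF y(1)] by simp
  then show False
    using normal_coeff_identity[OF y(1) m_closed[OF n(1) y(1)]] noncomm y(2) two
    by (simp split: if_splits)
qed

lemma commutes_if_sign_neg_fixed:
  assumes y: "y \<in> carrier G" "\<sigma> y = -1" "s y = y"
  shows "n \<otimes> y = y \<otimes> n"
proof (rule ccontr)
  assume "n \<otimes> y \<noteq> y \<otimes> n"
  then have "(-1::'f) = 1" using normal_coeff_identity[OF y(1) m_closed[OF n(1) y(1)]] n y by simp
  with two show False by (metis add_eq_0_iff one_add_one)
qed

lemma conj_if_sign_neg_not_commuting: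
  assumes y: "y \<in> carrier G" "\<sigma> y = -1" "n \<otimes> y \<noteq> y \<otimes> n"
  shows "y \<otimes> n = n \<otimes> s y"
proof (rule ccontr)
  assume c: "y \<otimes> n \<noteq> n \<otimes> s y"
  have "s y \<noteq> y" using commutes_if_sign_neg_fixed y by blast
  then have "y \<otimes> n \<noteq> s y \<otimes> n" using y n involution_closed[OF y(1)] by simp
  then show False
    using normal_coeff_identity[OF y(1) m_closed[OF y(1) n(1)]] n y c by (simp split: if_splits)
qed

lemma fixed_symmetric_central:
  assumes sign: "orientation G \<sigma>"
  shows "n \<in> group_center G"
  unfolding group_center_def
proof (intro CollectI conjI ballI n(1))
  fix g assume g: "g \<in> carrier G"
  have gn: "g \<otimes> n \<in> carrier G" using g n by simp
  have s_gn: "s (g \<otimes> n) = n \<otimes> s g" using inv g n unfolding group_involution_def by simp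
  have \<sigma>_gn: "\<sigma> (g \<otimes> n) = \<sigma> g" using sign g n unfolding orientation_def by simp
  have cancel: "n \<otimes> g = g \<otimes> n" if "n \<otimes> (g \<otimes> n) = (g \<otimes> n) \<otimes> n"
    using that g n by (metis m_assoc m_closed right_cancel)
  show "n \<otimes> g = g \<otimes> n"
  proof (rule ccontr)
    assume noncomm: "n \<otimes> g \<noteq> g \<otimes> n"
    consider "\<sigma> g = 1" | "\<sigma> g = -1" using sign g unfolding orientation_def by blast
    then show False
    proof cases
      case 1
      then have "s g = g" using commutes_if_sign_pos_not_fixed g noncomm by blast
      then have "s (g \<otimes> n) \<noteq> g \<otimes> n" using s_gn noncomm by simp
      then show False
        using commutes_if_sign_pos_not_fixed[OF gn] \<sigma>_gn 1 cancel noncomm by simp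
    next
      case 2
      then have "s (g \<otimes> n) = g \<otimes> n"
        using conj_if_sign_neg_not_commuting[OF g] noncomm s_gn by simp
      then show False
        using commutes_if_sign_neg_fixed[OF gn] \<sigma>_gn 2 cancel noncomm by simp
    qed
  qed
qed

end

theorem lemma8:
  fixes G :: "('g, 'b) monoid_scheme" and s :: "'g \<Rightarrow> 'g" and \<sigma> :: "'g \<Rightarrow> int"
  assumes "group G"
    and "infinite (UNIV :: 'f::field set)"
    and "(2::'f) \<noteq> 0"
    and "group_involution G s"
    and "orientation G \<sigma>"
    and "\<exists>g\<in>carrier G. \<sigma> g \<noteq> 1"
    and "\<forall>g\<in>carrier G. \<sigma> (g \<otimes>\<^bsub>G\<^esub> s g) = 1"
    and "\<forall>a\<in>(group_ring G :: ('g \<Rightarrow> 'f) set).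
           gr_mult G a (oriented_inv G s \<sigma> a) = gr_mult G (oriented_inv G s \<sigma> a) a"
  shows "{n \<in> carrier G. \<sigma> n = 1 \<and> s n = n} \<subseteq> group_center G"
  using fixed_symmetric_central[OF assms(1,4,3,8) _ _ _ assms(5)] by blast

end
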